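(* Let $(V,E)$ be a finite undirected graph, $y=(y_n)_{n\in V}\in\mathbb{S}^V$, and let $(w_n)_{n\in V}$, $(\lambda_{n,n'})_{\{n,n'\}\in E}$ be nonnegative real weights. Consider the nonconvex problem $$\text{(P)}\quad \min_{x\in\mathbb{S}^V}\ \Psi_{\mathrm{orig}}(x)=\sum_{n\in V}w_n(1-x_n\cdot y_n)+\sum_{\{n,n'\}\in E}\lambda_{n,n'}(1-x_n\cdot x_{n'})$$ and the convex problem $$\text{(R)}\quad \min\ \Psi_{\mathrm{conv}}(x,d,e,f,g)=\sum_{n\in V}w_n(1-x_n\cdot y_n)+\sum_{\{n,n'\}\in E}\lambda_{n,n'}(1-d_{n,n'})$$ over $x_n\in\mathbb{R}^3$ ($n\in V$) and $(d_{n,n'},e_{n,n'},f_{n,n'},g_{n,n'})\in\mathbb{R}^4$ ($\{n,n'\}\in E$), subject to $P_{n,n'}\succcurlyeq 0$ for all $\{n,n'\}\in E$. Then: (i) for every $x\in\mathbb{S}^V$ there exist $d,e,f,g$ such that $(x,d,e,f,g)$ is feasible for (R) and $\Psi_{\mathrm{conv}}(x,d,e,f,g)=\Psi_{\mathrm{orig}}(x)$; hence the optimal value of (R) is at most that of (P). (ii) If $(x^\star,d^\star,e^\star,f^\star,g^\star)$ is a minimizer of (R) such that $x^\star_n\in\mathbb{S}$ for every $n\in V$ and $d^\star_{n,n'}=x^\star_n\cdot x^\star_{n'}$ for every $\{n,n'\}\in E$, then $x^\star$ is a global minimizer of (P).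
   Context: $\mathbb{S}=\{x\in\mathbb{R}^3:\|x\|_2=1\}$, $x\cdot x'$ is the Euclidean inner product, $i=\sqrt{-1}$, and $\succcurlyeq 0$ means Hermitian positive semidefinite. Edges of $(V,E)$ are 2-element subsets $\{n,n'\}$ of $V$; for each edge a fixed ordering $(n,n')$ of its endpoints is chosen. For real $a,b,c,a',b',c',d,e,f,g$, define the $6\times 6$ Hermitian matrix $$P(a,b,c,a',b',c',d,e,f,g)=\begin{pmatrix} 1&0&-ci&-b-ai&-c'i&-b'-a'i\\ 0&1&b-ai&ci&b'-a'i&c'i\\ ci&b+ai&1&0&d-gi&-f-ei\\ -b+ai&-ci&0&1&f-ei&d+gi\\ c'i&b'+a'i&d+gi&f+ei&1&0\\ -b'+a'i&-c'i&-f+ei&d-gi&0&1 \end{pmatrix}.$$ For an edge $\{n,n'\}$ with $x_n=(x_n^1,x_n^2,x_n^3)$, $P_{n,n'}:=P(x_n^1,x_n^2,x_n^3,x_{n'}^1,x_{n'}^2,x_{n'}^3,d_{n,n'},e_{n,n'},f_{n,n'},g_{n,n'})$. *)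

theory Defs
  imports "HOL-Analysis.Analysis"
begin

definition sph :: "(real^3) set" where
  "sph = {x. norm x = 1}"

definition Pmat :: "real \<Rightarrow> real \<Rightarrow> real \<Rightarrow> real \<Rightarrow> real \<Rightarrow> real \<Rightarrow> real \<Rightarrow> real \<Rightarrow> real \<Rightarrow> real
    \<Rightarrow> nat \<Rightarrow> nat \<Rightarrow> complex" where
  "Pmat a b c a' b' c' d e f g = (\<lambda>i j.
     [[1, 0, Complex 0 (-c), Complex (-b) (-a), Complex 0 (-c'), Complex (-b') (-a')],
      [0, 1, Complex b (-a), Complex 0 c, Complex b' (-a'), Complex 0 c'],
      [Complex 0 c, Complex b a, 1, 0, Complex d (-g), Complex (-f) (-e)],
      [Complex (-b) a, Complex 0 (-c), 0, 1, Complex f (-e), Complex d g],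
      [Complex 0 c', Complex b' a', Complex d g, Complex f e, 1, 0],
      [Complex (-b') a', Complex 0 (-c'), Complex (-f) e, Complex d (-g), 0, 1]] ! i ! j)"

definition psd :: "nat \<Rightarrow> (nat \<Rightarrow> nat \<Rightarrow> complex) \<Rightarrow> bool" where
  "psd n M \<longleftrightarrow> (\<forall>i<n. \<forall>j<n. M i j = cnj (M j i)) \<and>
     (\<forall>v :: nat \<Rightarrow> complex. 0 \<le> Re (\<Sum>i<n. \<Sum>j<n. cnj (v i) * M i j * v j))"

text \<open>Edge matrix P_{n,n'} for the edge with chosen ordering (n,n') = ori ed.\<close>
definition Pedge :: "('v \<Rightarrow> real^3) \<Rightarrow> ('v set \<Rightarrow> 'v \<times> 'v) \<Rightarrow>
    ('v set \<Rightarrow> real) \<Rightarrow> ('v set \<Rightarrow> real) \<Rightarrow> ('v set \<Rightarrow> real) \<Rightarrow> ('v set \<Rightarrow> real) \<Rightarrow> 'v set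
    \<Rightarrow> nat \<Rightarrow> nat \<Rightarrow> complex" where
  "Pedge x ori d e f g ed =
     (let n = fst (ori ed); n' = snd (ori ed) in
      Pmat (x n $ 1) (x n $ 2) (x n $ 3) (x n' $ 1) (x n' $ 2) (x n' $ 3)
           (d ed) (e ed) (f ed) (g ed))"

definition feasibleR :: "'v set set \<Rightarrow> ('v set \<Rightarrow> 'v \<times> 'v) \<Rightarrow> ('v \<Rightarrow> real^3) \<Rightarrow>
    ('v set \<Rightarrow> real) \<Rightarrow> ('v set \<Rightarrow> real) \<Rightarrow> ('v set \<Rightarrow> real) \<Rightarrow> ('v set \<Rightarrow> real) \<Rightarrow> bool" where
  "feasibleR E ori x d e f g \<longleftrightarrow> (\<forall>ed\<in>E. psd 6 (Pedge x ori d e f g ed))"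

definition Psi_orig :: "'v set \<Rightarrow> 'v set set \<Rightarrow> ('v set \<Rightarrow> 'v \<times> 'v) \<Rightarrow> ('v \<Rightarrow> real) \<Rightarrow>
    ('v set \<Rightarrow> real) \<Rightarrow> ('v \<Rightarrow> real^3) \<Rightarrow> ('v \<Rightarrow> real^3) \<Rightarrow> real" where
  "Psi_orig V E ori w lam y x =
     (\<Sum>n\<in>V. w n * (1 - x n \<bullet> y n)) +
     (\<Sum>ed\<in>E. lam ed * (1 - x (fst (ori ed)) \<bullet> x (snd (ori ed))))"

definition Psi_conv :: "'v set \<Rightarrow> 'v set set \<Rightarrow> ('v \<Rightarrow> real) \<Rightarrow>
    ('v set \<Rightarrow> real) \<Rightarrow> ('v \<Rightarrow> real^3) \<Rightarrow> ('v \<Rightarrow> real^3) \<Rightarrow> ('v set \<Rightarrow> real) \<Rightarrow> real" where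
  "Psi_conv V E w lam y x d =
     (\<Sum>n\<in>V. w n * (1 - x n \<bullet> y n)) + (\<Sum>ed\<in>E. lam ed * (1 - d ed))"

end

theory Submission imports Defs "HOL-Analysis.Cross3" begin

unbundle cross3_syntax

text \<open>
For unit vectors \<open>u, v\<close> choose \<open>d = u \<bullet> v\<close> and \<open>(e, f, g) = v \<times> u\<close>. With this choice the
Hermitian form of \<open>P\<close> is a sum of two squared moduli plus \<open>(1 - |u|\<^sup>2)\<close> and \<open>(1 - |v|\<^sup>2)\<close>
times squared norms, so \<open>P \<succcurlyeq> 0\<close> and the relaxation loses nothing on the sphere. Since every
point of (P) thus lifts to a feasible point of (R) with the same value, a minimiser of (R)
whose \<open>x\<close>-part lies on the sphere with \<open>d = x \<bullet> x'\<close> is itself such a lift, and its value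
bounds that of every lifted point of (P) from below.
\<close>

lemma sum_lessThan_6: "(\<Sum>i<6::nat. F i) = F 0 + F 1 + F 2 + F 3 + F 4 + F 5"
  by (simp add: numeral_eq_Suc lessThan_Suc add_ac)

lemma Pmat_hermitian:
  assumes "i < 6" "j < 6"
  shows "Pmat a b c a' b' c' d e f g i j = cnj (Pmat a b c a' b' c' d e f g j i)"
  using assms by (auto simp add: Pmat_def numeral_eq_Suc less_Suc_eq complex_eq_iff)

text \<open>\<open>w0\<close> and \<open>w1\<close> are the first two entries of \<open>P v\<close>.\<close>

lemma Pmat_quadratic_form_sum_of_squares:
  fixes a b c a' b' c' :: real and v :: "nat \<Rightarrow> complex"
  defines "w0 \<equiv> v 0 + Complex 0 (-c) * v 2 + Complex (-b) (-a) * v 3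
                + Complex 0 (-c') * v 4 + Complex (-b') (-a') * v 5"
    and "w1 \<equiv> v 1 + Complex b (-a) * v 2 + Complex 0 c * v 3
                + Complex b' (-a') * v 4 + Complex 0 c' * v 5"
  shows "Re (\<Sum>i<6. \<Sum>j<6. cnj (v i) *
            Pmat a b c a' b' c' (a*a' + b*b' + c*c') (b'*c - c'*b) (c'*a - a'*c) (a'*b - b'*a) i j
            * v j)
       = (cmod w0)\<^sup>2 + (cmod w1)\<^sup>2
         + (1 - (a\<^sup>2 + b\<^sup>2 + c\<^sup>2)) * ((cmod (v 2))\<^sup>2 + (cmod (v 3))\<^sup>2)
         + (1 - (a'\<^sup>2 + b'\<^sup>2 + c'\<^sup>2)) * ((cmod (v 4))\<^sup>2 + (cmod (v 5))\<^sup>2)"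
proof -
  have v: "v j = Complex (Re (v j)) (Im (v j))" for j
    by simp
  show ?thesis
    unfolding sum_lessThan_6 Pmat_def w0_def w1_def cmod_power2
    by (subst (1 2 3 4 5 6) v) (simp add: algebra_simps power2_eq_square)
qed

lemma psd_Pmat_inner_cross:
  fixes u v :: "real^3"
  assumes "norm u \<le> 1" "norm v \<le> 1"
  shows "psd 6 (Pmat (u$1) (u$2) (u$3) (v$1) (v$2) (v$3)
                  (u \<bullet> v) ((v \<times> u)$1) ((v \<times> u)$2) ((v \<times> u)$3))"
proof -
  have norm_sq: "(z$1)\<^sup>2 + (z$2)\<^sup>2 + (z$3)\<^sup>2 = (norm z)\<^sup>2" for z :: "real^3"
    unfolding power2_norm_eq_inner by (simp add: inner_vec_def sum_3 power2_eq_square)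
  have "(norm u)\<^sup>2 \<le> 1" "(norm v)\<^sup>2 \<le> 1"
    using assms by (simp_all add: power_le_one)
  moreover have "(v \<times> u)$1 = v$2 * u$3 - v$3 * u$2" "(v \<times> u)$2 = v$3 * u$1 - v$1 * u$3"
    "(v \<times> u)$3 = v$1 * u$2 - v$2 * u$1" "u \<bullet> v = u$1 * v$1 + u$2 * v$2 + u$3 * v$3"
    by (simp_all add: cross3_simps)
  ultimately have "0 \<le> Re (\<Sum>i<6. \<Sum>j<6. cnj (z i) *
                Pmat (u$1) (u$2) (u$3) (v$1) (v$2) (v$3)
                  (u \<bullet> v) ((v \<times> u)$1) ((v \<times> u)$2) ((v \<times> u)$3) i j * z j)" for z
    by (simp only: Pmat_quadratic_form_sum_of_squares norm_sq) simp
  then show ?thesis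
    unfolding psd_def using Pmat_hermitian by blast
qed

lemma feasibleR_inner_cross_lift:
  assumes "\<forall>ed\<in>E. norm (x (fst (ori ed))) \<le> 1 \<and> norm (x (snd (ori ed))) \<le> 1"
  shows "feasibleR E ori x (\<lambda>ed. x (fst (ori ed)) \<bullet> x (snd (ori ed)))
           (\<lambda>ed. (x (snd (ori ed)) \<times> x (fst (ori ed)))$1)
           (\<lambda>ed. (x (snd (ori ed)) \<times> x (fst (ori ed)))$2)
           (\<lambda>ed. (x (snd (ori ed)) \<times> x (fst (ori ed)))$3)"
  unfolding feasibleR_def Pedge_def Let_def
proof
  fix ed assume "ed \<in> E"
  with assms show "psd 6 (Pmat (x (fst (ori ed)) $ 1) (x (fst (ori ed)) $ 2) (x (fst (ori ed)) $ 3)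
      (x (snd (ori ed)) $ 1) (x (snd (ori ed)) $ 2) (x (snd (ori ed)) $ 3)
      (x (fst (ori ed)) \<bullet> x (snd (ori ed))) ((x (snd (ori ed)) \<times> x (fst (ori ed))) $ 1)
      ((x (snd (ori ed)) \<times> x (fst (ori ed))) $ 2) ((x (snd (ori ed)) \<times> x (fst (ori ed))) $ 3))"
    by (intro psd_Pmat_inner_cross) auto
qed

lemma Psi_conv_eq_Psi_orig:
  assumes "\<forall>ed\<in>E. d ed = x (fst (ori ed)) \<bullet> x (snd (ori ed))"
  shows "Psi_conv V E w lam y x d = Psi_orig V E ori w lam y x"
  using assms unfolding Psi_conv_def Psi_orig_def by simp

lemma relaxation_lift:
  assumes "\<forall>ed\<in>E. ed \<subseteq> V" and "\<forall>ed\<in>E. ed = {fst (ori ed), snd (ori ed)}"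
    and "\<forall>n\<in>V. x n \<in> sph"
  shows "\<exists>d e f g. feasibleR E ori x d e f g \<and>
                   Psi_conv V E w lam y x d = Psi_orig V E ori w lam y x"
proof -
  have "fst (ori ed) \<in> V" "snd (ori ed) \<in> V" if "ed \<in> E" for ed
    using assms(1,2) that by blast+
  then have "\<forall>ed\<in>E. norm (x (fst (ori ed))) \<le> 1 \<and> norm (x (snd (ori ed))) \<le> 1"
    using assms(3) unfolding sph_def by simp
  from feasibleR_inner_cross_lift[OF this] show ?thesis
    by (intro exI conjI, assumption, intro Psi_conv_eq_Psi_orig) simp
qed

lemma relaxation_minimiser_minimises_original:
  assumes "\<forall>ed\<in>E. ed \<subseteq> V" and "\<forall>ed\<in>E. ed = {fst (ori ed), snd (ori ed)}"
    and minimal: "\<And>x d e f g. feasibleR E ori x d e f g \<Longrightarrow>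
                    Psi_conv V E w lam y xs ds \<le> Psi_conv V E w lam y x d"
    and ds_inner: "\<forall>ed\<in>E. ds ed = xs (fst (ori ed)) \<bullet> xs (snd (ori ed))"
    and "\<forall>n\<in>V. x n \<in> sph"
  shows "Psi_orig V E ori w lam y xs \<le> Psi_orig V E ori w lam y x"
proof -
  obtain d e f g where feasible: "feasibleR E ori x d e f g"
    and lift: "Psi_conv V E w lam y x d = Psi_orig V E ori w lam y x"
    using relaxation_lift[OF assms(1,2,5)] by blast
  have "Psi_orig V E ori w lam y xs = Psi_conv V E w lam y xs ds"
    using Psi_conv_eq_Psi_orig[OF ds_inner] by simp
  also have "\<dots> \<le> Psi_conv V E w lam y x d"
    by (rule minimal[OF feasible])
  finally show ?thesis
    using lift by simp
qed

theorem mainTheorem4: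
  fixes V :: "'v set" and E :: "'v set set" and ori :: "'v set \<Rightarrow> 'v \<times> 'v"
    and y :: "'v \<Rightarrow> real^3" and w :: "'v \<Rightarrow> real" and lam :: "'v set \<Rightarrow> real"
  assumes finV: "finite V"
    and edges: "\<forall>ed\<in>E. ed \<subseteq> V \<and> card ed = 2"
    and ori: "\<forall>ed\<in>E. ed = {fst (ori ed), snd (ori ed)}"
    and y_sph: "\<forall>n\<in>V. y n \<in> sph"
    and w_nonneg: "\<forall>n\<in>V. 0 \<le> w n"
    and lam_nonneg: "\<forall>ed\<in>E. 0 \<le> lam ed"
  shows
    "(\<forall>x. (\<forall>n\<in>V. x n \<in> sph) \<longrightarrow>
        (\<exists>d e f g. feasibleR E ori x d e f g \<and>
                   Psi_conv V E w lam y x d = Psi_orig V E ori w lam y x))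
     \<and>
     (\<forall>xs ds es fs gs.
        (feasibleR E ori xs ds es fs gs \<and>
         (\<forall>x d e f g. feasibleR E ori x d e f g \<longrightarrow>
              Psi_conv V E w lam y xs ds \<le> Psi_conv V E w lam y x d) \<and>
         (\<forall>n\<in>V. xs n \<in> sph) \<and>
         (\<forall>ed\<in>E. ds ed = xs (fst (ori ed)) \<bullet> xs (snd (ori ed))))
        \<longrightarrow>
        ((\<forall>n\<in>V. xs n \<in> sph) \<and>
         (\<forall>x. (\<forall>n\<in>V. x n \<in> sph) \<longrightarrow>
              Psi_orig V E ori w lam y xs \<le> Psi_orig V E ori w lam y x)))"
proof -
  have edges_in_V: "\<forall>ed\<in>E. ed \<subseteq> V"
    using edges by blast
  show ?thesis
  proof (intro conjI allI impI)
    fix x :: "'v \<Rightarrow> real^3"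
    assume "\<forall>n\<in>V. x n \<in> sph"
    then show "\<exists>d e f g. feasibleR E ori x d e f g \<and>
                     Psi_conv V E w lam y x d = Psi_orig V E ori w lam y x"
      by (rule relaxation_lift[OF edges_in_V ori])
  next
    fix xs ds es fs gs x
    assume opt: "feasibleR E ori xs ds es fs gs \<and>
           (\<forall>x d e f g. feasibleR E ori x d e f g \<longrightarrow>
                Psi_conv V E w lam y xs ds \<le> Psi_conv V E w lam y x d) \<and>
           (\<forall>n\<in>V. xs n \<in> sph) \<and>
           (\<forall>ed\<in>E. ds ed = xs (fst (ori ed)) \<bullet> xs (snd (ori ed)))"
    then show "\<forall>n\<in>V. xs n \<in> sph" by blast
    assume "\<forall>n\<in>V. x n \<in> sph"
    with opt show "Psi_orig V E ori w lam y xs \<le> Psi_orig V E ori w lam y x"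
      using relaxation_minimiser_minimises_original[OF edges_in_V ori] by blast
  qed
qed

end
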